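(* Let $\mu>\operatorname{cf}(\mu)=\kappa$ be a singular cardinal and let $\lambda$ be a regular cardinal with $\mu<\lambda\le 2^\mu$. Let $\mathcal{S}$ be a nice system for $\mu$, consisting of $(\mu_i:i<\kappa)$, $(\lambda_i:i<\kappa)$, $(\mathscr{D}_i:i<\kappa)$, $(W_i:i<\kappa)$, $(g_i:i<\kappa)$. Assume: (1) $\mathscr{D}$ is a uniform ultrafilter over $\kappa$ which is generated by at most $\lambda$ many sets; (2) $\bar f=(f_\alpha:\alpha<\lambda)$ is a sullam in $(\prod_{i<\kappa}W_i,\mathscr{D})$; (3) $\operatorname{cf}(\prod_{i<\kappa}\mathscr{D}_i,\supseteq)=\lambda$. Then there exists a uniform ultrafilter $\mathscr{U}$ over $\mu$ with $\operatorname{Ch}(\mathscr{U})\le\lambda$.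
   Context: A filter over a cardinal $\theta$ is uniform if all its members have cardinality $\theta$; all filters $\mathscr{D}$ over a regular $\theta$ considered here are uniform and contain $\{\theta-u:u\in[\theta]^{<\theta}\}$. For $A,B\subseteq\theta$, $A\subseteq^* B$ means $|A-B|<\theta$. A base for a uniform filter $\mathcal{F}$ over $\theta$ is a subfamily $\mathcal{A}\subseteq\mathcal{F}$ such that every $B\in\mathcal{F}$ has some $A\in\mathcal{A}$ with $A\subseteq^*B$; $\operatorname{Ch}(\mathcal{F})$ is the minimal size of a base. For a filter $\mathscr{D}$ over $\theta$: $I(\mathscr{D})=\{A\subseteq\theta:\theta-A\in\mathscr{D}\}$, $\mathscr{D}^+=\mathcal{P}(\theta)-I(\mathscr{D})$, and $A\subseteq_{\mathscr{D}}B$ iff $A-B\in I(\mathscr{D})$. A quasi order $(W,\le_W)$ is a reflexive transitive relation; $V\subseteq W$ is dense if for every $x\in W$ there is $y\in V$ with $x\le_W y$. For a quasi order $W$ and a filter $\mathscr{D}$ over $\theta$, a function $g:W\to\mathscr{D}^+$ is $\subseteq_{\mathscr{D}}$-decreasing if $s\le_W t$ implies $g(t)\subseteq_{\mathscr{D}}g(s)$, and $g$ has the decidability property if for every $s\in W$ and every $A\subseteq\theta$ there is $t\in W$ with $s\le_W t$ and ($g(t)\subseteq_{\mathscr{D}}A$ or $g(t)\subseteq_{\mathscr{D}}\theta-A$). Nice system for singular $\mu$ with $\operatorname{cf}(\mu)=\kappa$: an increasing sequence of cardinals $(\mu_i:i<\kappa)$ with $\mu=\bigcup_i\mu_i$;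 an increasing sequence of regular cardinals $(\lambda_i:i<\kappa)$ with $\mu_i\le\lambda_i<\mu_{i+1}$; filters $\mathscr{D}_i$ over $\lambda_i$; quasi orders $W_i$; and functions $g_i:W_i\to\mathscr{D}_i^+$ each $\subseteq_{\mathscr{D}_i}$-decreasing with the decidability property. Sullam: for a regular $\kappa$, an ultrafilter (or filter) $\mathscr{D}$ over $\kappa$ containing all co-bounded sets, and quasi orders $W_i$, a sequence $(f_\alpha:\alpha<\lambda)$ with $f_\alpha\in\prod_{i<\kappa}W_i$ is a sullam in $(\prod_{i<\kappa}W_i,\mathscr{D})$ if (a) for $\alpha<\beta$, $\{i:f_\alpha(i)\le_{W_i}f_\beta(i)\}\in\mathscr{D}$, and (b) whenever $V_i\subseteq W_i$ is dense for each $i$, there is $\alpha<\lambda$ with $\{i:f_\alpha(i)\in V_i\}\in\mathscr{D}$. $\operatorname{cf}(\prod_{i<\kappa}\mathscr{D}_i,\supseteq)$ is the minimal size of a family $\mathcal{F}\subseteq\prod_{i<\kappa}\mathscr{D}_i$ such that for every $\langle B_i:i<\kappa\rangle\in\prod_i\mathscr{D}_i$ there is $\langle A_i:i<\kappa\rangle\in\mathcal{F}$ with $\{i:A_i\subseteq B_i\}\in\mathscr{D}$. *)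

theory Defs
  imports Main "HOL-Library.FuncSet"
begin

abbreviation cle :: "'a rel \<Rightarrow> 'b rel \<Rightarrow> bool" where "cle r s \<equiv> (r, s) \<in> ordLeq"
abbreviation clt :: "'a rel \<Rightarrow> 'b rel \<Rightarrow> bool" where "clt r s \<equiv> (r, s) \<in> ordLess"
abbreviation ceq :: "'a rel \<Rightarrow> 'b rel \<Rightarrow> bool" where "ceq r s \<equiv> (r, s) \<in> ordIso"

definition regular_cardinal :: "'a rel \<Rightarrow> bool" where
  "regular_cardinal r \<longleftrightarrow> Cinfinite r \<and> regularCard r"

definition is_cf :: "'a rel \<Rightarrow> 'b rel \<Rightarrow> bool" where
  "is_cf r k \<longleftrightarrow> Card_order k \<and>
     (\<exists>A. A \<subseteq> Field r \<and> cofinal A r \<and> ceq (card_of A) k) \<and>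
     (\<forall>A. A \<subseteq> Field r \<and> cofinal A r \<longrightarrow> cle k (card_of A))"

definition filter_on :: "'a set \<Rightarrow> 'a set set \<Rightarrow> bool" where
  "filter_on X F \<longleftrightarrow> F \<subseteq> Pow X \<and> X \<in> F \<and> {} \<notin> F \<and>
     (\<forall>A\<in>F. \<forall>B\<in>F. A \<inter> B \<in> F) \<and>
     (\<forall>A\<in>F. \<forall>B. A \<subseteq> B \<and> B \<subseteq> X \<longrightarrow> B \<in> F)"

(* uniform filter over X: all members have cardinality |X|, and it contains
   every co-small set X - u with |u| < |X| (standing convention of the paper) *)
definition uniform_filter :: "'a set \<Rightarrow> 'a set set \<Rightarrow> bool" where
  "uniform_filter X F \<longleftrightarrow> filter_on X F \<and> (\<forall>A\<in>F. ceq (card_of A) (card_of X)) \<and>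
     (\<forall>u. u \<subseteq> X \<and> clt (card_of u) (card_of X) \<longrightarrow> X - u \<in> F)"

definition ultrafilter_on :: "'a set \<Rightarrow> 'a set set \<Rightarrow> bool" where
  "ultrafilter_on X F \<longleftrightarrow> filter_on X F \<and> (\<forall>A. A \<subseteq> X \<longrightarrow> A \<in> F \<or> X - A \<in> F)"

definition generates :: "'a set \<Rightarrow> 'a set set \<Rightarrow> 'a set set \<Rightarrow> bool" where
  "generates X G F \<longleftrightarrow> G \<subseteq> F \<and>
     (\<forall>A\<in>F. \<exists>H. finite H \<and> H \<subseteq> G \<and> X \<inter> \<Inter>H \<subseteq> A)"

definition subset_star :: "'a set \<Rightarrow> 'a set \<Rightarrow> 'a set \<Rightarrow> bool" where
  "subset_star X A B \<longleftrightarrow> clt (card_of (A - B)) (card_of X)"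

definition is_base :: "'a set \<Rightarrow> 'a set set \<Rightarrow> 'a set set \<Rightarrow> bool" where
  "is_base X F B \<longleftrightarrow> B \<subseteq> F \<and> (\<forall>C\<in>F. \<exists>A\<in>B. subset_star X A C)"

definition Ch_le :: "'a set \<Rightarrow> 'a set set \<Rightarrow> 'b rel \<Rightarrow> bool" where
  "Ch_le X F lam \<longleftrightarrow> (\<exists>B. is_base X F B \<and> cle (card_of B) lam)"

definition ideal_of :: "'a set \<Rightarrow> 'a set set \<Rightarrow> 'a set set" where
  "ideal_of X F = {A. A \<subseteq> X \<and> X - A \<in> F}"

definition positive_sets :: "'a set \<Rightarrow> 'a set set \<Rightarrow> 'a set set" where
  "positive_sets X F = Pow X - ideal_of X F"

definition subset_D :: "'a set \<Rightarrow> 'a set set \<Rightarrow> 'a set \<Rightarrow> 'a set \<Rightarrow> bool" where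
  "subset_D X F A B \<longleftrightarrow> A - B \<in> ideal_of X F"

definition quasi_order :: "'w set \<Rightarrow> 'w rel \<Rightarrow> bool" where
  "quasi_order W le \<longleftrightarrow> le \<subseteq> W \<times> W \<and> refl_on W le \<and> trans le"

definition dense_in :: "'w set \<Rightarrow> 'w rel \<Rightarrow> 'w set \<Rightarrow> bool" where
  "dense_in W le V \<longleftrightarrow> V \<subseteq> W \<and> (\<forall>x\<in>W. \<exists>y\<in>V. (x, y) \<in> le)"

definition decreasing_D :: "'a set \<Rightarrow> 'a set set \<Rightarrow> 'w set \<Rightarrow> 'w rel \<Rightarrow> ('w \<Rightarrow> 'a set) \<Rightarrow> bool" where
  "decreasing_D X F W le g \<longleftrightarrow>
     (\<forall>s\<in>W. \<forall>t\<in>W. (s, t) \<in> le \<longrightarrow> subset_D X F (g t) (g s))"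

definition decidability :: "'a set \<Rightarrow> 'a set set \<Rightarrow> 'w set \<Rightarrow> 'w rel \<Rightarrow> ('w \<Rightarrow> 'a set) \<Rightarrow> bool" where
  "decidability X F W le g \<longleftrightarrow>
     (\<forall>s\<in>W. \<forall>A. A \<subseteq> X \<longrightarrow> (\<exists>t\<in>W. (s, t) \<in> le \<and>
        (subset_D X F (g t) A \<or> subset_D X F (g t) (X - A))))"

(* Nice system for the singular cardinal |M| with cofinality kr (index set Field kr).
   mu i, lam i are sets whose cardinalities are mu_i, lambda_i; D i is a filter over lam i. *)
definition nice_system ::
  "'a set \<Rightarrow> 'i rel \<Rightarrow> ('i \<Rightarrow> 'a set) \<Rightarrow> ('i \<Rightarrow> 'a set) \<Rightarrow> ('i \<Rightarrow> 'a set set)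
    \<Rightarrow> ('i \<Rightarrow> 'w set) \<Rightarrow> ('i \<Rightarrow> 'w rel) \<Rightarrow> ('i \<Rightarrow> 'w \<Rightarrow> 'a set) \<Rightarrow> bool" where
  "nice_system M kr mu lam D W le g \<longleftrightarrow>
     (\<forall>i\<in>Field kr. \<forall>j\<in>Field kr. i \<noteq> j \<and> (i, j) \<in> kr \<longrightarrow>
        clt (card_of (mu i)) (card_of (mu j)) \<and> clt (card_of (lam i)) (card_of (lam j))) \<and>
     (\<forall>i\<in>Field kr. cle (card_of (mu i)) (card_of M)) \<and>
     (\<forall>B::'a set. clt (card_of B) (card_of M) \<longrightarrow> (\<exists>i\<in>Field kr. cle (card_of B) (card_of (mu i)))) \<and>
     (\<forall>i\<in>Field kr. regular_cardinal (card_of (lam i)) \<and> cle (card_of (mu i)) (card_of (lam i))) \<and>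
     (\<forall>i\<in>Field kr. \<forall>j\<in>Field kr.
        (i \<noteq> j \<and> (i, j) \<in> kr \<and> (\<forall>j'\<in>Field kr. i \<noteq> j' \<and> (i, j') \<in> kr \<longrightarrow> (j, j') \<in> kr))
        \<longrightarrow> clt (card_of (lam i)) (card_of (mu j))) \<and>
     (\<forall>i\<in>Field kr. uniform_filter (lam i) (D i) \<and> quasi_order (W i) (le i) \<and>
        g i \<in> W i \<rightarrow> positive_sets (lam i) (D i) \<and>
        decreasing_D (lam i) (D i) (W i) (le i) (g i) \<and>
        decidability (lam i) (D i) (W i) (le i) (g i))"

definition sullam ::
  "'i set \<Rightarrow> 'i set set \<Rightarrow> ('i \<Rightarrow> 'w set) \<Rightarrow> ('i \<Rightarrow> 'w rel) \<Rightarrow> 'l rel \<Rightarrow> ('l \<Rightarrow> 'i \<Rightarrow> 'w) \<Rightarrow> bool" where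
  "sullam K E W le lr f \<longleftrightarrow>
     (\<forall>\<alpha>\<in>Field lr. f \<alpha> \<in> Pi K W) \<and>
     (\<forall>\<alpha>\<in>Field lr. \<forall>\<beta>\<in>Field lr. \<alpha> \<noteq> \<beta> \<and> (\<alpha>, \<beta>) \<in> lr \<longrightarrow>
        {i\<in>K. (f \<alpha> i, f \<beta> i) \<in> le i} \<in> E) \<and>
     (\<forall>V. (\<forall>i\<in>K. dense_in (W i) (le i) (V i)) \<longrightarrow>
        (\<exists>\<alpha>\<in>Field lr. {i\<in>K. f \<alpha> i \<in> V i} \<in> E))"

definition prod_cofinal :: "'i set \<Rightarrow> 'i set set \<Rightarrow> ('i \<Rightarrow> 'a set set) \<Rightarrow> ('i \<Rightarrow> 'a set) set \<Rightarrow> bool" where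
  "prod_cofinal K E D Fam \<longleftrightarrow> Fam \<subseteq> Pi\<^sub>E K D \<and>
     (\<forall>B\<in>Pi\<^sub>E K D. \<exists>A\<in>Fam. {i\<in>K. A i \<subseteq> B i} \<in> E)"

definition cf_prod_eq :: "'i set \<Rightarrow> 'i set set \<Rightarrow> ('i \<Rightarrow> 'a set set) \<Rightarrow> 'l rel \<Rightarrow> bool" where
  "cf_prod_eq K E D lam \<longleftrightarrow>
     (\<exists>Fam. prod_cofinal K E D Fam \<and> ceq (card_of Fam) lam) \<and>
     (\<forall>Fam. prod_cofinal K E D Fam \<longrightarrow> cle lam (card_of Fam))"

end

theory Submission imports Defs begin

unbundle cardinal_syntax

(*
  Embed every \<lambda>\<^sub>i into \<mu> by an injection h\<^sub>i. Declare A \<subseteq> \<mu> large if for some \<alpha> < \<lambda>, for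
  E-almost all i, the condition g\<^sub>i(f\<^sub>\<alpha>(i)) is D\<^sub>i-almost contained in h\<^sub>i\<^sup>-\<^sup>1[A]. The sullam makes these
  witnesses directed, so the large sets form a filter; density of the conditions deciding a
  given set makes it an ultrafilter. A set of size < \<mu> has size < \<lambda>\<^sub>i for almost all i, hence
  a D\<^sub>i-null preimage, and cannot be large. Finally, every large set contains one of the sets
  \<Union>{h\<^sub>i[g\<^sub>i(f\<^sub>\<alpha>(i)) \<inter> A\<^sub>i] : i \<in> Y}, where Y ranges over finite intersections of generators of E
  and (A\<^sub>i) over a cofinal subfamily of \<Pi>D\<^sub>i; there are only \<lambda> of these.
*)

subsection \<open>Cardinal arithmetic\<close>

lemma card_of_lists_length_le_infinite:
  assumes "infinite A"
  shows "|{xs. set xs \<subseteq> A \<and> length xs = n}| \<le>o |A|"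
proof (induction n)
  case 0
  have "{xs. set xs \<subseteq> A \<and> length xs = 0} = {[]}" by auto
  moreover have "A \<noteq> {}" using assms by auto
  ultimately show ?case using card_of_singl_ordLeq by metis
next
  case (Suc n)
  let ?L = "{xs. set xs \<subseteq> A \<and> length xs = n}"
  have split: "{xs. set xs \<subseteq> A \<and> length xs = Suc n} = (\<lambda>(x, xs). x # xs) ` (A \<times> ?L)"
    by (auto simp: image_def length_Suc_conv)
  have "|A \<times> ?L| \<le>o |A|"
    using card_of_Times_ordLeq_infinite_Field[of "|A|", unfolded Field_card_of,
        OF assms ordIso_imp_ordLeq[OF card_of_refl] Suc card_of_card_order_on] .
  then show ?case unfolding split using card_of_image ordLeq_transitive by blast
qed

lemma card_of_Fpow_le_infinite:
  assumes "infinite A"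
  shows "|Fpow A| \<le>o |A|"
proof -
  let ?lists = "\<Union>n. {xs. set xs \<subseteq> A \<and> length xs = n}"
  have covered: "Fpow A \<subseteq> set ` ?lists"
  proof
    fix X assume "X \<in> Fpow A"
    then obtain xs where "set xs = X" "X \<subseteq> A" using finite_list unfolding Fpow_def by blast
    then show "X \<in> set ` ?lists" by blast
  qed
  have lists: "|?lists| \<le>o |A|"
  proof (rule card_of_UNION_ordLeq_infinite[OF assms])
    show "|UNIV :: nat set| \<le>o |A|" using assms by (simp add: infinite_iff_card_of_nat)
  qed (use card_of_lists_length_le_infinite[OF assms] in blast)
  show ?thesis
    using ordLeq_transitive[OF card_of_mono1[OF covered] ordLeq_transitive[OF card_of_image lists]] .
qed

lemma card_of_Field_Fpow_Times_le:
  assumes r: "Card_order r" "infinite (Field r)" and "|A| \<le>o r" "|B| \<le>o r"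
  shows "|Field r \<times> Fpow A \<times> B| \<le>o r"
proof -
  have field: "|Field r| \<le>o r"
    using card_of_Field_ordIso[OF r(1)] ordIso_iff_ordLeq by blast
  have "|A| \<le>o |Field r|"
    using ordLeq_ordIso_trans[OF assms(3) ordIso_symmetric[OF card_of_Field_ordIso[OF r(1)]]] .
  then obtain \<phi> where \<phi>: "inj_on \<phi> A" "\<phi> ` A \<subseteq> Field r"
    using card_of_ordLeq[of A "Field r"] by blast
  have "|Fpow A| \<le>o |Fpow (Field r)|"
    using card_of_ordLeq[of "Fpow A" "Fpow (Field r)"] inj_on_image_Fpow[OF \<phi>(1)]
      image_Fpow_mono[OF \<phi>(2)] by blast
  then have "|Fpow A| \<le>o r"
    using ordLeq_transitive[OF _ ordLeq_transitive[OF card_of_Fpow_le_infinite[OF r(2)] field]] by blast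
  then have "|Fpow A \<times> B| \<le>o r"
    using card_of_Times_ordLeq_infinite_Field[OF r(2) _ assms(4) r(1)] by blast
  then show ?thesis
    using card_of_Times_ordLeq_infinite_Field[OF r(2) field _ r(1)] by blast
qed

lemma card_of_under_ordLess_infinite:
  assumes r: "Card_order r" and inf: "infinite (Field r)" and a: "a \<in> Field r"
  shows "|under r a| <o r"
proof -
  obtain b where b: "b \<in> Field r" "a \<noteq> b" "(a, b) \<in> r"
    using infinite_Card_order_limit[OF r inf a] by blast
  have wo: "wo_rel r" using Card_order_wo_rel[OF r] .
  have "under r a \<subseteq> underS r b"
  proof
    fix x assume "x \<in> under r a"
    then have xa: "(x, a) \<in> r" unfolding under_def by simp
    then have "(x, b) \<in> r" using wo_rel.TRANS[OF wo] b(3) unfolding trans_def by blast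
    moreover have "x \<noteq> b" using xa b wo_rel.ANTISYM[OF wo] unfolding antisym_def by blast
    ultimately show "x \<in> underS r b" unfolding underS_def by simp
  qed
  then show ?thesis
    using card_of_mono1 card_of_underS[OF r b(1)] ordLeq_ordLess_trans by blast
qed

lemma filter_on_Int: "filter_on X F \<Longrightarrow> A \<in> F \<Longrightarrow> B \<in> F \<Longrightarrow> A \<inter> B \<in> F"
  unfolding filter_on_def by blast

lemma filter_on_mono: "filter_on X F \<Longrightarrow> A \<in> F \<Longrightarrow> A \<subseteq> B \<Longrightarrow> B \<subseteq> X \<Longrightarrow> B \<in> F"
  unfolding filter_on_def by blast

lemma filter_on_top: "filter_on X F \<Longrightarrow> X \<in> F"
  unfolding filter_on_def by blast

lemma filter_on_subset: "filter_on X F \<Longrightarrow> A \<in> F \<Longrightarrow> A \<subseteq> X"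
  unfolding filter_on_def by blast

lemma filter_on_nonempty: "filter_on X F \<Longrightarrow> A \<in> F \<Longrightarrow> A \<noteq> {}"
  unfolding filter_on_def by blast

lemma filter_on_Int_mono:
  "filter_on X F \<Longrightarrow> A \<in> F \<Longrightarrow> B \<in> F \<Longrightarrow> A \<inter> B \<subseteq> C \<Longrightarrow> C \<subseteq> X \<Longrightarrow> C \<in> F"
  by (meson filter_on_Int filter_on_mono)

lemma filter_on_finite_Inter:
  assumes F: "filter_on X F" and "finite H" "H \<subseteq> F"
  shows "X \<inter> \<Inter>H \<in> F"
  using assms(2,3)
proof (induction H rule: finite_induct)
  case empty
  then show ?case using filter_on_top[OF F] by simp
next
  case (insert A H)
  then have "X \<inter> \<Inter>(insert A H) = A \<inter> (X \<inter> \<Inter>H)" using filter_on_subset[OF F] by auto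
  then show ?case using insert filter_on_Int[OF F] by simp
qed

lemma uniform_filter_if_small_sets_null:
  assumes ultra: "ultrafilter_on X F"
    and small: "\<And>u. u \<subseteq> X \<Longrightarrow> |u| <o |X| \<Longrightarrow> u \<notin> F"
  shows "uniform_filter X F"
  unfolding uniform_filter_def
proof (intro conjI ballI allI impI)
  show F: "filter_on X F" using ultra unfolding ultrafilter_on_def by blast
  fix A assume A: "A \<in> F"
  then have "A \<subseteq> X" using filter_on_subset[OF F] by blast
  moreover have "|X| \<le>o |A|"
    using small[OF \<open>A \<subseteq> X\<close>] A ordLess_or_ordLeq[OF card_of_Well_order card_of_Well_order] by blast
  ultimately show "|A| =o |X|" using card_of_mono1 ordIso_iff_ordLeq by blast
next
  fix u assume "u \<subseteq> X \<and> |u| <o |X|"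
  then show "X - u \<in> F" using small ultra unfolding ultrafilter_on_def by blast
qed

subsection \<open>Almost inclusion modulo a filter\<close>

lemma subset_D_iff: "subset_D X F A B \<longleftrightarrow> A - B \<subseteq> X \<and> X - (A - B) \<in> F"
  unfolding subset_D_def ideal_of_def by simp

lemma subset_D_top: "filter_on X F \<Longrightarrow> A \<subseteq> X \<Longrightarrow> subset_D X F A X"
  unfolding subset_D_iff by (simp add: filter_on_top Diff_eq_empty_iff[THEN iffD2])

lemma subset_D_mono:
  assumes F: "filter_on X F" and AB: "subset_D X F A B" and "B \<subseteq> C"
  shows "subset_D X F A C"
  using AB filter_on_mono[OF F, of "X - (A - B)" "X - (A - C)"] \<open>B \<subseteq> C\<close>
  unfolding subset_D_iff by blast

lemma subset_D_Int:
  assumes F: "filter_on X F" and "subset_D X F A B" "subset_D X F A C"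
  shows "subset_D X F A (B \<inter> C)"
proof -
  have "X - (A - (B \<inter> C)) = (X - (A - B)) \<inter> (X - (A - C))" by blast
  then show ?thesis using assms filter_on_Int[OF F] unfolding subset_D_iff by auto
qed

lemma subset_D_trans:
  assumes F: "filter_on X F" and "A \<subseteq> X" "subset_D X F A B" "subset_D X F B C"
  shows "subset_D X F A C"
proof -
  have "(X - (A - B)) \<inter> (X - (B - C)) \<subseteq> X - (A - C)" by blast
  then show ?thesis
    using assms filter_on_Int_mono[OF F, of "X - (A - B)" "X - (B - C)" "X - (A - C)"]
    unfolding subset_D_iff by blast
qed

lemma positive_not_subset_D_null:
  assumes F: "filter_on X F" and A: "A \<in> positive_sets X F" and B: "X - B \<in> F"
  shows "\<not> subset_D X F A B"
proof
  assume "subset_D X F A B"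
  moreover have "(X - (A - B)) \<inter> (X - B) \<subseteq> X - A" by blast
  ultimately have "X - A \<in> F"
    using B filter_on_Int_mono[OF F, of "X - (A - B)" "X - B" "X - A"] unfolding subset_D_iff by blast
  then show False using A unfolding positive_sets_def ideal_of_def by blast
qed

subsection \<open>The ultrafilter induced by a sullam\<close>

locale sullam_embedding =
  fixes M :: "'a set" and K :: "'i set" and E :: "'i set set"
    and lam :: "'i \<Rightarrow> 'b set" and D :: "'i \<Rightarrow> 'b set set"
    and W :: "'i \<Rightarrow> 'w set" and le :: "'i \<Rightarrow> 'w rel" and g :: "'i \<Rightarrow> 'w \<Rightarrow> 'b set"
    and lr :: "'l rel" and f :: "'l \<Rightarrow> 'i \<Rightarrow> 'w" and h :: "'i \<Rightarrow> 'b \<Rightarrow> 'a"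
  assumes E_ultrafilter: "ultrafilter_on K E"
    and D_filter: "\<And>i. i \<in> K \<Longrightarrow> filter_on (lam i) (D i)"
    and g_positive: "\<And>i. i \<in> K \<Longrightarrow> g i \<in> W i \<rightarrow> positive_sets (lam i) (D i)"
    and g_decreasing: "\<And>i. i \<in> K \<Longrightarrow> decreasing_D (lam i) (D i) (W i) (le i) (g i)"
    and g_decidable: "\<And>i. i \<in> K \<Longrightarrow> decidability (lam i) (D i) (W i) (le i) (g i)"
    and f_sullam: "sullam K E W le lr f"
    and lr_total: "total_on (Field lr) lr"
    and lr_nonempty: "Field lr \<noteq> {}"
    and h_into: "\<And>i. i \<in> K \<Longrightarrow> h i ` lam i \<subseteq> M"
begin

definition pull :: "'i \<Rightarrow> 'a set \<Rightarrow> 'b set" where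
  "pull i A = {x \<in> lam i. h i x \<in> A}"

definition forcing_set :: "'l \<Rightarrow> 'a set \<Rightarrow> 'i set" where
  "forcing_set \<alpha> A = {i \<in> K. subset_D (lam i) (D i) (g i (f \<alpha> i)) (pull i A)}"

definition induced_filter :: "'a set set" where
  "induced_filter = {A. A \<subseteq> M \<and> (\<exists>\<alpha>\<in>Field lr. forcing_set \<alpha> A \<in> E)}"

lemma E_filter: "filter_on K E"
  using E_ultrafilter unfolding ultrafilter_on_def by blast

lemma forcing_set_subset: "forcing_set \<alpha> A \<subseteq> K"
  unfolding forcing_set_def by blast

lemma f_in_W: "\<alpha> \<in> Field lr \<Longrightarrow> i \<in> K \<Longrightarrow> f \<alpha> i \<in> W i"
  using f_sullam unfolding sullam_def by blast

lemma g_f_positive: "\<alpha> \<in> Field lr \<Longrightarrow> i \<in> K \<Longrightarrow> g i (f \<alpha> i) \<in> positive_sets (lam i) (D i)"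
  by (rule funcset_mem[OF g_positive f_in_W])

lemma g_f_subset: "\<alpha> \<in> Field lr \<Longrightarrow> i \<in> K \<Longrightarrow> g i (f \<alpha> i) \<subseteq> lam i"
  using g_f_positive unfolding positive_sets_def by blast

lemma forcing_set_mono:
  assumes "A \<subseteq> B" shows "forcing_set \<alpha> A \<subseteq> forcing_set \<alpha> B"
proof -
  have "pull i A \<subseteq> pull i B" for i using assms unfolding pull_def by blast
  then show ?thesis unfolding forcing_set_def using subset_D_mono D_filter by blast
qed

lemma forcing_set_Int: "forcing_set \<alpha> A \<inter> forcing_set \<alpha> B \<subseteq> forcing_set \<alpha> (A \<inter> B)"
proof -
  have "pull i (A \<inter> B) = pull i A \<inter> pull i B" for i unfolding pull_def by blast
  then show ?thesis unfolding forcing_set_def using subset_D_Int[OF D_filter] by auto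
qed

lemma forcing_set_later:
  assumes \<alpha>: "\<alpha> \<in> Field lr" and \<beta>: "\<beta> \<in> Field lr" and "(\<alpha>, \<beta>) \<in> lr"
    and forced: "forcing_set \<alpha> A \<in> E"
  shows "forcing_set \<beta> A \<in> E"
proof (cases "\<alpha> = \<beta>")
  case True
  then show ?thesis using forced by simp
next
  case False
  let ?S = "{i\<in>K. (f \<alpha> i, f \<beta> i) \<in> le i}"
  have "?S \<in> E" using f_sullam \<alpha> \<beta> False \<open>(\<alpha>, \<beta>) \<in> lr\<close> unfolding sullam_def by blast
  moreover have "forcing_set \<alpha> A \<inter> ?S \<subseteq> forcing_set \<beta> A"
  proof
    fix i assume "i \<in> forcing_set \<alpha> A \<inter> ?S"
    then have i: "i \<in> K" and forced_i: "subset_D (lam i) (D i) (g i (f \<alpha> i)) (pull i A)"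
      and "(f \<alpha> i, f \<beta> i) \<in> le i"
      unfolding forcing_set_def by blast+
    then have "subset_D (lam i) (D i) (g i (f \<beta> i)) (g i (f \<alpha> i))"
      using g_decreasing[OF i] f_in_W[OF \<alpha> i] f_in_W[OF \<beta> i] unfolding decreasing_D_def by blast
    then have "subset_D (lam i) (D i) (g i (f \<beta> i)) (pull i A)"
      using subset_D_trans[OF D_filter[OF i] g_f_subset[OF \<beta> i] _ forced_i] by blast
    then show "i \<in> forcing_set \<beta> A" unfolding forcing_set_def using i by blast
  qed
  ultimately show ?thesis
    using filter_on_Int_mono[OF E_filter forced] forcing_set_subset by blast
qed

lemma forcing_set_decides:
  assumes "A \<subseteq> M"
  obtains \<alpha> where "\<alpha> \<in> Field lr" "forcing_set \<alpha> A \<in> E \<or> forcing_set \<alpha> (M - A) \<in> E"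
proof -
  define V where "V i = {t \<in> W i. subset_D (lam i) (D i) (g i t) (pull i A) \<or>
      subset_D (lam i) (D i) (g i t) (lam i - pull i A)}" for i
  have "dense_in (W i) (le i) (V i)" if "i \<in> K" for i
  proof -
    have "pull i A \<subseteq> lam i" unfolding pull_def by blast
    then show ?thesis
      using g_decidable[OF that] unfolding decidability_def dense_in_def V_def by blast
  qed
  then obtain \<alpha> where \<alpha>: "\<alpha> \<in> Field lr" and decided: "{i\<in>K. f \<alpha> i \<in> V i} \<in> E"
    using f_sullam unfolding sullam_def by blast
  have "pull i (M - A) = lam i - pull i A" if "i \<in> K" for i
    using h_into[OF that] unfolding pull_def by blast
  then have covered: "{i\<in>K. f \<alpha> i \<in> V i} \<inter> (K - forcing_set \<alpha> A) \<subseteq> forcing_set \<alpha> (M - A)"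
    unfolding V_def forcing_set_def by auto
  show thesis
  proof (cases "forcing_set \<alpha> A \<in> E")
    case False
    then have "K - forcing_set \<alpha> A \<in> E"
      using E_ultrafilter forcing_set_subset unfolding ultrafilter_on_def by blast
    then have "forcing_set \<alpha> (M - A) \<in> E"
      using filter_on_Int_mono[OF E_filter decided _ covered forcing_set_subset] by blast
    then show thesis using that \<alpha> by blast
  qed (use that \<alpha> in blast)
qed

lemma pull_top: "i \<in> K \<Longrightarrow> pull i M = lam i"
  using h_into unfolding pull_def by blast

lemma forcing_set_top: "\<alpha> \<in> Field lr \<Longrightarrow> forcing_set \<alpha> M = K"
  unfolding forcing_set_def using pull_top subset_D_top[OF D_filter g_f_subset] by auto

lemma forcing_set_empty:
  assumes "\<alpha> \<in> Field lr" shows "forcing_set \<alpha> {} = {}"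
proof -
  have "\<not> subset_D (lam i) (D i) (g i (f \<alpha> i)) {}" if "i \<in> K" for i
    using positive_not_subset_D_null[OF D_filter[OF that] g_f_positive[OF assms that]]
      filter_on_top[OF D_filter[OF that]] by simp
  then show ?thesis unfolding forcing_set_def pull_def by auto
qed

lemma induced_filter_common_index:
  assumes "A \<in> induced_filter" "B \<in> induced_filter"
  obtains \<gamma> where "\<gamma> \<in> Field lr" "forcing_set \<gamma> A \<in> E" "forcing_set \<gamma> B \<in> E"
proof -
  obtain \<alpha> \<beta> where \<alpha>: "\<alpha> \<in> Field lr" "forcing_set \<alpha> A \<in> E"
    and \<beta>: "\<beta> \<in> Field lr" "forcing_set \<beta> B \<in> E"
    using assms unfolding induced_filter_def by blast
  consider "\<alpha> = \<beta>" | "(\<alpha>, \<beta>) \<in> lr" | "(\<beta>, \<alpha>) \<in> lr"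
    using lr_total \<alpha>(1) \<beta>(1) unfolding total_on_def by blast
  then show thesis
  proof cases
    case 1
    then show thesis using that \<alpha> \<beta> by blast
  next
    case 2
    then show thesis using that \<beta> forcing_set_later[OF \<alpha>(1) \<beta>(1) _ \<alpha>(2)] by blast
  next
    case 3
    then show thesis using that \<alpha> forcing_set_later[OF \<beta>(1) \<alpha>(1) _ \<beta>(2)] by blast
  qed
qed

lemma ultrafilter_on_induced_filter: "ultrafilter_on M induced_filter"
  unfolding ultrafilter_on_def filter_on_def
proof (intro conjI ballI allI impI)
  obtain \<alpha> where \<alpha>: "\<alpha> \<in> Field lr" using lr_nonempty by blast
  show "induced_filter \<subseteq> Pow M" unfolding induced_filter_def by blast
  have "forcing_set \<alpha> M \<in> E" using forcing_set_top[OF \<alpha>] filter_on_top[OF E_filter] by simp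
  then show "M \<in> induced_filter" using \<alpha> unfolding induced_filter_def by blast
  show "{} \<notin> induced_filter"
  proof
    assume "{} \<in> induced_filter"
    then obtain \<beta> where "\<beta> \<in> Field lr" "forcing_set \<beta> {} \<in> E"
      unfolding induced_filter_def by blast
    then show False using forcing_set_empty filter_on_nonempty[OF E_filter] by metis
  qed
next
  fix A B assume A: "A \<in> induced_filter" and B: "B \<in> induced_filter"
  then obtain \<gamma> where "\<gamma> \<in> Field lr" "forcing_set \<gamma> A \<in> E" "forcing_set \<gamma> B \<in> E"
    by (rule induced_filter_common_index)
  then have "forcing_set \<gamma> (A \<inter> B) \<in> E"
    using filter_on_Int_mono[OF E_filter _ _ forcing_set_Int forcing_set_subset] by blast
  then show "A \<inter> B \<in> induced_filter"
    using A \<open>\<gamma> \<in> Field lr\<close> unfolding induced_filter_def by blast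
next
  fix A B assume "A \<in> induced_filter" and AB: "A \<subseteq> B \<and> B \<subseteq> M"
  then obtain \<alpha> where "\<alpha> \<in> Field lr" "forcing_set \<alpha> A \<in> E"
    unfolding induced_filter_def by blast
  then have "forcing_set \<alpha> B \<in> E"
    using filter_on_mono[OF E_filter _ forcing_set_mono forcing_set_subset] AB by blast
  then show "B \<in> induced_filter" using AB \<open>\<alpha> \<in> Field lr\<close> unfolding induced_filter_def by blast
next
  fix A assume "A \<subseteq> M"
  then obtain \<alpha> where "\<alpha> \<in> Field lr" "forcing_set \<alpha> A \<in> E \<or> forcing_set \<alpha> (M - A) \<in> E"
    by (rule forcing_set_decides)
  then show "A \<in> induced_filter \<or> M - A \<in> induced_filter"
    using \<open>A \<subseteq> M\<close> unfolding induced_filter_def by blast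
qed

lemma small_set_not_in_induced_filter:
  assumes inj: "\<And>i. i \<in> K \<Longrightarrow> inj_on (h i) (lam i)"
    and D_uniform: "\<And>i. i \<in> K \<Longrightarrow> uniform_filter (lam i) (D i)"
    and large: "{i\<in>K. |u| <o |lam i|} \<in> E"
  shows "u \<notin> induced_filter"
proof
  assume "u \<in> induced_filter"
  then obtain \<alpha> where \<alpha>: "\<alpha> \<in> Field lr" and forced: "forcing_set \<alpha> u \<in> E"
    unfolding induced_filter_def by blast
  obtain i where "i \<in> forcing_set \<alpha> u" and u_lam: "|u| <o |lam i|"
    using filter_on_nonempty[OF E_filter filter_on_Int[OF E_filter forced large]] by blast
  then have i: "i \<in> K" and sub: "subset_D (lam i) (D i) (g i (f \<alpha> i)) (pull i u)"
    unfolding forcing_set_def by blast+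
  have "inj_on (h i) (pull i u)" "h i ` pull i u \<subseteq> u"
    using inj_on_subset[OF inj[OF i]] unfolding pull_def by auto
  then have "|pull i u| \<le>o |u|" using card_of_ordLeq by blast
  then have "|pull i u| <o |lam i|" using ordLeq_ordLess_trans u_lam by blast
  moreover have "pull i u \<subseteq> lam i" unfolding pull_def by blast
  moreover have "\<forall>v. v \<subseteq> lam i \<and> |v| <o |lam i| \<longrightarrow> lam i - v \<in> D i"
    using D_uniform[OF i] unfolding uniform_filter_def by blast
  ultimately have "lam i - pull i u \<in> D i" by blast
  then show False
    using positive_not_subset_D_null[OF D_filter[OF i] g_f_positive[OF \<alpha> i]] sub by blast
qed

lemma uniform_filter_induced_filter:
  assumes "\<And>i. i \<in> K \<Longrightarrow> inj_on (h i) (lam i)"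
    and "\<And>i. i \<in> K \<Longrightarrow> uniform_filter (lam i) (D i)"
    and "\<And>u. u \<subseteq> M \<Longrightarrow> |u| <o |M| \<Longrightarrow> {i\<in>K. |u| <o |lam i|} \<in> E"
  shows "uniform_filter M induced_filter"
  using uniform_filter_if_small_sets_null[OF ultrafilter_on_induced_filter]
    small_set_not_in_induced_filter assms by blast

definition base_set :: "'l \<Rightarrow> 'i set set \<Rightarrow> ('i \<Rightarrow> 'b set) \<Rightarrow> 'a set" where
  "base_set \<alpha> H A = (\<Union>i\<in>K \<inter> \<Inter>H. h i ` (g i (f \<alpha> i) \<inter> A i))"

lemma forcing_set_base_set:
  assumes \<alpha>: "\<alpha> \<in> Field lr" and A: "A \<in> Pi\<^sub>E K D"
  shows "K \<inter> \<Inter>H \<subseteq> forcing_set \<alpha> (base_set \<alpha> H A)"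
proof
  fix i assume iH: "i \<in> K \<inter> \<Inter>H"
  then have i: "i \<in> K" by blast
  let ?S = "g i (f \<alpha> i) - pull i (base_set \<alpha> H A)"
  have S: "?S \<subseteq> lam i - A i"
    using iH g_f_subset[OF \<alpha> i] unfolding base_set_def pull_def by blast
  have "A i \<in> D i" using A i by blast
  moreover have "A i \<subseteq> lam i - ?S" using S filter_on_subset[OF D_filter[OF i] \<open>A i \<in> D i\<close>] by blast
  ultimately have "lam i - ?S \<in> D i" using filter_on_mono[OF D_filter[OF i]] by blast
  then have "subset_D (lam i) (D i) (g i (f \<alpha> i)) (pull i (base_set \<alpha> H A))"
    using S unfolding subset_D_iff by blast
  then show "i \<in> forcing_set \<alpha> (base_set \<alpha> H A)" unfolding forcing_set_def using i by blast
qed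

lemma base_set_below:
  assumes gen: "generates K G E" and cof: "prod_cofinal K E D Fam" and C: "C \<in> induced_filter"
  obtains \<alpha> H A where "\<alpha> \<in> Field lr" "H \<in> Fpow G" "A \<in> Fam"
    "base_set \<alpha> H A \<in> induced_filter" "base_set \<alpha> H A \<subseteq> C"
proof -
  obtain \<alpha> where \<alpha>: "\<alpha> \<in> Field lr" and forced: "forcing_set \<alpha> C \<in> E"
    using C unfolding induced_filter_def by blast
  define B where "B = restrict (\<lambda>i. if i \<in> forcing_set \<alpha> C
    then lam i - (g i (f \<alpha> i) - pull i C) else lam i) K"
  have "B \<in> Pi\<^sub>E K D"
    using filter_on_top[OF D_filter] unfolding B_def forcing_set_def subset_D_iff by auto
  then obtain A where A: "A \<in> Fam" and AB: "{i\<in>K. A i \<subseteq> B i} \<in> E"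
    using cof unfolding prod_cofinal_def by blast
  then have A_Pi: "A \<in> Pi\<^sub>E K D" using cof unfolding prod_cofinal_def by blast
  obtain H where H: "finite H" "H \<subseteq> G"
    and H_sub: "K \<inter> \<Inter>H \<subseteq> forcing_set \<alpha> C \<inter> {i\<in>K. A i \<subseteq> B i}"
    using gen filter_on_Int[OF E_filter forced AB] unfolding generates_def by blast
  have "K \<inter> \<Inter>H \<in> E"
    using filter_on_finite_Inter[OF E_filter H(1)] H(2) gen unfolding generates_def by blast
  then have "forcing_set \<alpha> (base_set \<alpha> H A) \<in> E"
    using filter_on_mono[OF E_filter _ forcing_set_base_set[OF \<alpha> A_Pi] forcing_set_subset] by blast
  moreover have below: "base_set \<alpha> H A \<subseteq> C"
    using H_sub unfolding base_set_def B_def pull_def by fastforce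
  moreover have "C \<subseteq> M" using C unfolding induced_filter_def by blast
  ultimately have "base_set \<alpha> H A \<in> induced_filter"
    using \<alpha> unfolding induced_filter_def by blast
  moreover have "H \<in> Fpow G" using H unfolding Fpow_def by blast
  ultimately show thesis using that \<alpha> A below by blast
qed

lemma Ch_le_induced_filter:
  assumes gen: "generates K G E" "|G| \<le>o lr" and cof: "prod_cofinal K E D Fam" "|Fam| \<le>o lr"
    and lr: "Card_order lr" "infinite (Field lr)"
  shows "Ch_le M induced_filter lr"
proof -
  let ?I = "Field lr \<times> Fpow G \<times> Fam"
  define Bs where "Bs = (\<lambda>(\<alpha>, H, A). base_set \<alpha> H A) ` ?I \<inter> induced_filter"
  have U: "filter_on M induced_filter"
    using ultrafilter_on_induced_filter unfolding ultrafilter_on_def by blast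
  have "M \<noteq> {}" using filter_on_nonempty[OF U filter_on_top[OF U]] .
  then have empty_small: "|{}::'a set| <o |M|"
    using ordLess_or_ordLeq[OF card_of_Well_order card_of_Well_order] card_of_empty3 by blast
  have "is_base M induced_filter Bs"
    unfolding is_base_def
  proof (intro conjI ballI)
    show "Bs \<subseteq> induced_filter" unfolding Bs_def by blast
    fix C assume "C \<in> induced_filter"
    then obtain \<alpha> H A where "\<alpha> \<in> Field lr" "H \<in> Fpow G" "A \<in> Fam"
      and U_base: "base_set \<alpha> H A \<in> induced_filter" and below: "base_set \<alpha> H A \<subseteq> C"
      by (rule base_set_below[OF gen(1) cof(1)])
    then have "(\<alpha>, H, A) \<in> ?I" by simp
    then have "base_set \<alpha> H A \<in> Bs" using U_base unfolding Bs_def by (force intro: rev_image_eqI)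
    moreover have "subset_star M (base_set \<alpha> H A) C"
      using empty_small below unfolding subset_star_def by (metis Diff_eq_empty_iff)
    ultimately show "\<exists>B\<in>Bs. subset_star M B C" by blast
  qed
  moreover have "|Bs| \<le>o lr"
  proof -
    have "|Bs| \<le>o |(\<lambda>(\<alpha>, H, A). base_set \<alpha> H A) ` ?I|"
      unfolding Bs_def by (rule card_of_mono1) blast
    then show ?thesis
      using ordLeq_transitive[OF _ ordLeq_transitive[OF card_of_image
            card_of_Field_Fpow_Times_le[OF lr gen(2) cof(2)]]] by blast
  qed
  ultimately show ?thesis unfolding Ch_le_def by blast
qed

end

subsection \<open>Nice systems\<close>

lemma nice_system_lam_le:
  assumes nice: "nice_system M kr mu lam D W le g"
    and kr: "Card_order kr" "infinite (Field kr)" and i: "i \<in> Field kr"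
  shows "|lam i| \<le>o |M|"
proof -
  define S where "S = {j \<in> Field kr. i \<noteq> j \<and> (i, j) \<in> kr}"
  have wo: "wo_rel kr" using Card_order_wo_rel[OF kr(1)] .
  have "S \<noteq> {}" "S \<subseteq> Field kr"
    using infinite_Card_order_limit[OF kr i] unfolding S_def by blast+
  then have "wo_rel.minim kr S \<in> S" "\<forall>j'\<in>S. (wo_rel.minim kr S, j') \<in> kr"
    using wo_rel.minim_in[OF wo] wo_rel.minim_least[OF wo] by blast+
  then have "|lam i| <o |mu (wo_rel.minim kr S)|" "wo_rel.minim kr S \<in> Field kr"
    using nice i unfolding nice_system_def S_def by blast+
  then show ?thesis
    using nice ordLeq_transitive[OF ordLess_imp_ordLeq] unfolding nice_system_def by blast
qed

lemma nice_system_eventually_large: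
  fixes M u :: "'a set"
  assumes nice: "nice_system M kr mu lam D W le g"
    and kr: "Card_order kr" "infinite (Field kr)" and E: "uniform_filter (Field kr) E"
    and small: "|u| <o |M|"
  shows "{i \<in> Field kr. |u| <o |lam i|} \<in> E"
proof -
  obtain j where j: "j \<in> Field kr" and u_mu: "|u| \<le>o |mu j|"
    using nice small unfolding nice_system_def by blast
  have wo: "wo_rel kr" using Card_order_wo_rel[OF kr(1)] .
  have "|under kr j| <o |Field kr|"
    using ordLess_ordIso_trans[OF card_of_under_ordLess_infinite[OF kr j]
        ordIso_symmetric[OF card_of_Field_ordIso[OF kr(1)]]] .
  then have tail: "Field kr - under kr j \<in> E"
    using E under_Field[of kr j] unfolding uniform_filter_def by blast
  have "Field kr - under kr j \<subseteq> {i \<in> Field kr. |u| <o |lam i|}"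
  proof
    fix i assume "i \<in> Field kr - under kr j"
    then have i: "i \<in> Field kr" and "(i, j) \<notin> kr" unfolding under_def by auto
    then have "j \<noteq> i" "(j, i) \<in> kr"
      using wo_rel.REFL[OF wo] wo_rel.TOTALS[OF wo] j unfolding refl_on_def by blast+
    then have "|mu j| <o |mu i|"
      using nice i j unfolding nice_system_def by blast
    moreover have "|mu i| \<le>o |lam i|"
      using nice i unfolding nice_system_def by blast
    ultimately show "i \<in> {i \<in> Field kr. |u| <o |lam i|}"
      using i u_mu ordLeq_ordLess_trans ordLess_ordLeq_trans by blast
  qed
  then show ?thesis
    using filter_on_mono[OF _ tail] E unfolding uniform_filter_def by blast
qed

theorem theorem2p4:
  fixes M :: "'a set" and kr :: "'i rel" and lr :: "'l rel"
    and mu lam :: "'i \<Rightarrow> 'a set" and D :: "'i \<Rightarrow> 'a set set"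
    and W :: "'i \<Rightarrow> 'w set" and le :: "'i \<Rightarrow> 'w rel" and g :: "'i \<Rightarrow> 'w \<Rightarrow> 'a set"
    and E :: "'i set set" and f :: "'l \<Rightarrow> 'i \<Rightarrow> 'w"
  assumes kappa: "regular_cardinal kr"
    and cf_mu: "is_cf (card_of M) kr"
    and singular: "clt kr (card_of M)"
    and lambda_reg: "regular_cardinal lr"
    and mu_lt_lambda: "clt (card_of M) lr"
    and lambda_le: "cle lr (card_of (Pow M))"
    and nice: "nice_system M kr mu lam D W le g"
    and E_ultra: "ultrafilter_on (Field kr) E \<and> uniform_filter (Field kr) E"
    and E_gen: "\<exists>G. generates (Field kr) G E \<and> cle (card_of G) lr"
    and sul: "sullam (Field kr) E W le lr f"
    and cfp: "cf_prod_eq (Field kr) E D lr"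
  shows "\<exists>U. ultrafilter_on M U \<and> uniform_filter M U \<and> Ch_le M U lr"
proof -
  have kr: "Card_order kr" "infinite (Field kr)" and lr: "Card_order lr" "infinite (Field lr)"
    using kappa lambda_reg unfolding regular_cardinal_def cinfinite_def by auto
  have "\<forall>i\<in>Field kr. \<exists>h. inj_on h (lam i) \<and> h ` lam i \<subseteq> M"
    using nice_system_lam_le[OF nice kr] card_of_ordLeq by blast
  then obtain h where h: "\<And>i. i \<in> Field kr \<Longrightarrow> inj_on (h i) (lam i) \<and> h i ` lam i \<subseteq> M"
    by metis
  have D: "\<And>i. i \<in> Field kr \<Longrightarrow> uniform_filter (lam i) (D i)"
    using nice unfolding nice_system_def by blast
  interpret sullam_embedding M "Field kr" E lam D W le g lr f h
    using E_ultra D nice sul h wo_rel.TOTAL[OF Card_order_wo_rel[OF lr(1)]] lr(2)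
    unfolding sullam_embedding_def nice_system_def uniform_filter_def by auto
  obtain G Fam where "generates (Field kr) G E" "|G| \<le>o lr"
    "prod_cofinal (Field kr) E D Fam" "|Fam| \<le>o lr"
    using E_gen cfp unfolding cf_prod_eq_def by (auto dest: ordIso_imp_ordLeq)
  then have "Ch_le M induced_filter lr" using Ch_le_induced_filter lr by blast
  moreover have "uniform_filter M induced_filter"
    using uniform_filter_induced_filter h D
      nice_system_eventually_large[OF nice kr conjunct2[OF E_ultra]] by blast
  ultimately show ?thesis using ultrafilter_on_induced_filter by blast
qed

end
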